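(* Let $\Gamma=\{\{(1)\},\{(0)\},\rightarrow,=\}\cup\{\mathrm{OR}^m : m\in\mathbb N, m\ge1\}$. Then every irreducible Boolean relation which is IHSB$+$ is a permutation of an element of $\Gamma$.
   Context: Here $\rightarrow=\{(0,0),(0,1),(1,1)\}$, $==\{(0,0),(1,1)\}$, $\{(1)\},\{(0)\}$ express the literals $x,\overline x$, and $\mathrm{OR}^m=\{0,1\}^m\setminus\{(0,\dots,0)\}$. A Boolean relation is IHSB$+$ if it is the solution set of a conjunction of clauses of the forms $x$, $\overline x$, $x\rightarrow y$, $(x_1\vee\dots\vee x_n)$. An $n$-ary relation $R$ is irreducible if for every formula $R_1(x^1_1,\dots,x^1_{k_1})\wedge\dots\wedge R_m(x^m_1,\dots,x^m_{k_m})$ (each $R_i$ an arbitrary $k_i$-ary Boolean relation, variables among $x_1,\dots,x_n$) equivalent to $R(x_1,\dots,x_n)$, some $R_i$ has arity at least $n$. A relation $R$ is a permutation of $S$ if $R(x_1,\dots,x_n)$ is equivalent to $S(x_{\Pi(1)},\dots,x_{\Pi(n)})$ for some permutation $\Pi$ of $\{1,\dots,n\}$. *)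

theory Defs
  imports Main
begin

text \<open>An n-ary Boolean relation is a set of bool lists of length n;
 position i of a tuple is the value of variable x_(i+1).\<close>

definition is_rel :: "nat \<Rightarrow> bool list set \<Rightarrow> bool" where
  "is_rel n R \<longleftrightarrow> (\<forall>t\<in>R. length t = n)"

datatype clause = CPos nat | CNeg nat | CImp nat nat | COr "nat list"

fun clause_vars :: "clause \<Rightarrow> nat set" where
  "clause_vars (CPos i) = {i}"
| "clause_vars (CNeg i) = {i}"
| "clause_vars (CImp i j) = {i, j}"
| "clause_vars (COr is) = set is"

fun clause_wf :: "clause \<Rightarrow> bool" where
  "clause_wf (COr is) = (is \<noteq> [])"
| "clause_wf _ = True"

fun clause_sat :: "bool list \<Rightarrow> clause \<Rightarrow> bool" where
  "clause_sat a (CPos i) = (a ! i)"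
| "clause_sat a (CNeg i) = (\<not> a ! i)"
| "clause_sat a (CImp i j) = (a ! i \<longrightarrow> a ! j)"
| "clause_sat a (COr is) = (\<exists>i\<in>set is. a ! i)"

definition IHSB_plus :: "nat \<Rightarrow> bool list set \<Rightarrow> bool" where
  "IHSB_plus n R \<longleftrightarrow> (\<exists>cs :: clause list.
     (\<forall>c\<in>set cs. clause_wf c \<and> clause_vars c \<subseteq> {..<n}) \<and>
     R = {a. length a = n \<and> (\<forall>c\<in>set cs. clause_sat a c)})"

text \<open>An atom (k, S, vs) stands for S(x_vs!0, ..., x_vs!(k-1)) with S a k-ary relation.\<close>
definition atom_ok :: "nat \<Rightarrow> nat \<times> bool list set \<times> nat list \<Rightarrow> bool" where
  "atom_ok n at = (case at of (k, S, vs) \<Rightarrow>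
     is_rel k S \<and> length vs = k \<and> set vs \<subseteq> {..<n})"

definition atom_sat :: "bool list \<Rightarrow> nat \<times> bool list set \<times> nat list \<Rightarrow> bool" where
  "atom_sat a at = (case at of (k, S, vs) \<Rightarrow> map (\<lambda>j. a ! j) vs \<in> S)"

definition irreducible :: "nat \<Rightarrow> bool list set \<Rightarrow> bool" where
  "irreducible n R \<longleftrightarrow> (\<forall>F :: (nat \<times> bool list set \<times> nat list) list.
     (\<forall>at\<in>set F. atom_ok n at) \<and>
     {a. length a = n \<and> (\<forall>at\<in>set F. atom_sat a at)} = R
     \<longrightarrow> (\<exists>at\<in>set F. fst at \<ge> n))"

definition is_permutation_of :: "nat \<Rightarrow> bool list set \<Rightarrow> bool list set \<Rightarrow> bool" where
  "is_permutation_of n R S \<longleftrightarrow> (\<exists>\<pi>. bij_betw \<pi> {..<n} {..<n} \<and>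
     R = {a. length a = n \<and> map (\<lambda>i. a ! \<pi> i) [0..<n] \<in> S})"

definition OR_rel :: "nat \<Rightarrow> bool list set" where
  "OR_rel m = {a. length a = m \<and> True \<in> set a}"

definition Gamma :: "(nat \<times> bool list set) set" where
  "Gamma = {(1, {[True]}), (1, {[False]}),
            (2, {[False, False], [False, True], [True, True]}),
            (2, {[False, False], [True, True]})}
           \<union> {(m, OR_rel m) | m. m \<ge> 1}"

end

theory Submission
  imports Defs
begin

text \<open>A conjunction of constraints each on fewer than n variables is reducible, so the clauses
  defining an irreducible IHSB+ relation include one on all n variables; for \<open>n \<ge> 3\<close> this can
  only be \<open>x\<^sub>1 \<or> \<dots> \<or> x\<^sub>n\<close>. Any further non-tautological clause either implies
  this long clause or, being \<open>\<not> x\<^sub>i\<close> or \<open>x\<^sub>i \<longrightarrow> x\<^sub>j\<close>, lets one drop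
  \<open>x\<^sub>i\<close> from it; either way the definition becomes reducible, so the relation is
  \<open>OR\<^sup>n\<close>. No clause has zero variables, which excludes \<open>n = 0\<close>, and arities 1 and 2
  are settled by truth tables, where for \<open>n = 2\<close> closure of IHSB+ relations under
  \<open>(x, y, z) \<mapsto> x \<or> (y \<and> z)\<close> rules out exclusive or and nand.\<close>

lemma not_irreducible_if_narrow_constraints:
  assumes narrow: "\<forall>(vs, P)\<in>set L. set vs \<subseteq> {..<n} \<and> length vs < n"
    and R: "R = {a. length a = n \<and> (\<forall>(vs, P)\<in>set L. P (map (\<lambda>j. a ! j) vs))}"
  shows "\<not> irreducible n R"
proof
  assume "irreducible n R"
  define F where "F = map (\<lambda>(vs, P). (length vs, {t. length t = length vs \<and> P t}, vs)) L"
  have "\<forall>at\<in>set F. atom_ok n at"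
    using narrow by (auto simp: F_def atom_ok_def is_rel_def)
  moreover have "{a. length a = n \<and> (\<forall>at\<in>set F. atom_sat a at)} = R"
    unfolding R by (auto simp: F_def atom_sat_def)
  ultimately obtain at where "at \<in> set F" "fst at \<ge> n"
    using \<open>irreducible n R\<close> unfolding irreducible_def by blast
  then show False
    using narrow by (auto simp: F_def)
qed

lemma is_permutation_of_same:
  assumes "is_rel n R" and "\<forall>a. length a = n \<longrightarrow> (a \<in> R \<longleftrightarrow> a \<in> S)"
  shows "is_permutation_of n R S"
  unfolding is_permutation_of_def
proof (intro exI[of _ id] conjI)
  have "a \<in> R \<longleftrightarrow> length a = n \<and> map (\<lambda>i. a ! id i) [0..<n] \<in> S" for a
  proof (cases "length a = n")
    case True
    then have "map (\<lambda>i. a ! id i) [0..<n] = a"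
      using map_nth[of a] by simp
    then show ?thesis
      using True assms(2) by simp
  qed (use assms(1) in \<open>auto simp: is_rel_def\<close>)
  then show "R = {a. length a = n \<and> map (\<lambda>i. a ! id i) [0..<n] \<in> S}"
    by blast
qed simp

lemma list_length_1: "length a = 1 \<Longrightarrow> a = [a ! 0]"
  by (cases a) auto

lemma list_length_2: "length a = 2 \<Longrightarrow> a = [a ! 0, a ! 1]"
  by (cases a; cases "tl a"; cases "tl (tl a)") (auto simp: numeral_2_eq_2)

lemma is_permutation_of_swap:
  assumes "is_rel 2 R" and "\<forall>x y. [x, y] \<in> R \<longleftrightarrow> [y, x] \<in> S"
  shows "is_permutation_of 2 R S"
  unfolding is_permutation_of_def
proof (intro exI[of _ "\<lambda>i. 1 - i"] conjI)
  have "{..<2::nat} = {0, 1}" by auto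
  then show "bij_betw (\<lambda>i::nat. 1 - i) {..<2} {..<2}"
    by (auto simp: bij_betw_def inj_on_def)
  have swap: "map (\<lambda>i. a ! (1 - i)) [0..<2] = [a ! 1, a ! 0]" for a :: "bool list"
    by (simp add: numeral_2_eq_2)
  have "a \<in> R \<longleftrightarrow> length a = 2 \<and> [a ! 1, a ! 0] \<in> S" for a
  proof (cases "length a = 2")
    case True
    have "a \<in> R \<longleftrightarrow> [a ! 0, a ! 1] \<in> R"
      using arg_cong[OF list_length_2[OF True], of "\<lambda>x. x \<in> R"] .
    then show ?thesis
      using True assms(2) by simp
  qed (use assms(1) in \<open>auto simp: is_rel_def\<close>)
  then show "R = {a. length a = 2 \<and> map (\<lambda>i. a ! (1 - i)) [0..<2] \<in> S}"
    unfolding swap by blast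
qed

lemma is_permutation_of_same_2:
  assumes "is_rel 2 R" and "\<forall>x y. [x, y] \<in> R \<longleftrightarrow> [x, y] \<in> S"
  shows "is_permutation_of 2 R S"
proof (rule is_permutation_of_same[OF assms(1)], intro allI impI)
  fix a :: "bool list"
  assume "length a = 2"
  then show "a \<in> R \<longleftrightarrow> a \<in> S"
    using assms(2) list_length_2 by metis
qed

lemma Gamma_members:
  "(1, {[True]}) \<in> Gamma" "(1, {[False]}) \<in> Gamma"
  "(2, {[False, False], [False, True], [True, True]}) \<in> Gamma"
  "(2, {[False, False], [True, True]}) \<in> Gamma"
  "m \<ge> 1 \<Longrightarrow> (m, OR_rel m) \<in> Gamma"
  unfolding Gamma_def by blast+

definition solutions :: "nat \<Rightarrow> clause list \<Rightarrow> bool list set" where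
  "solutions n cs = {a. length a = n \<and> (\<forall>c\<in>set cs. clause_sat a c)}"

lemma IHSB_plusE:
  assumes "IHSB_plus n R"
  obtains cs where "\<forall>c\<in>set cs. clause_wf c \<and> clause_vars c \<subseteq> {..<n}" and "R = solutions n cs"
  using assms unfolding IHSB_plus_def solutions_def by blast

lemma clause_vars_nonempty: "clause_wf c \<Longrightarrow> clause_vars c \<noteq> {}"
  by (cases c) auto

lemma IHSB_plus_closed:
  assumes "IHSB_plus n R" "a \<in> R" "b \<in> R" "c \<in> R" "length r = n"
    and r: "\<forall>i<n. r ! i = (a ! i \<or> b ! i \<and> c ! i)"
  shows "r \<in> R"
proof -
  obtain cs where wf: "\<forall>c\<in>set cs. clause_wf c \<and> clause_vars c \<subseteq> {..<n}"
    and R: "R = solutions n cs"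
    using assms(1) by (rule IHSB_plusE)
  have "clause_sat r d" if "d \<in> set cs" for d
  proof -
    have "clause_sat a d" "clause_sat b d" "clause_sat c d" "clause_vars d \<subseteq> {..<n}"
      using that assms(2-4) wf by (auto simp: R solutions_def)
    then show ?thesis
      using r by (cases d) auto
  qed
  then show ?thesis
    using assms(5) by (simp add: R solutions_def)
qed

fun clause_constraint :: "clause \<Rightarrow> nat list \<times> (bool list \<Rightarrow> bool)" where
  "clause_constraint (CPos i) = ([i], \<lambda>t. t ! 0)"
| "clause_constraint (CNeg i) = ([i], \<lambda>t. \<not> t ! 0)"
| "clause_constraint (CImp i j) =
     (if i = j then ([i], \<lambda>_. True) else ([i, j], \<lambda>t. t ! 0 \<longrightarrow> t ! 1))"
| "clause_constraint (COr js) = (remdups js, \<lambda>t. True \<in> set t)"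

lemma clause_constraint_sat:
  "snd (clause_constraint c) (map (\<lambda>j. a ! j) (fst (clause_constraint c))) = clause_sat a c"
  by (cases c) auto

lemma set_clause_constraint: "set (fst (clause_constraint c)) = clause_vars c"
  by (cases c) auto

lemma length_clause_constraint: "length (fst (clause_constraint c)) = card (clause_vars c)"
proof -
  have "distinct (fst (clause_constraint c))"
    by (cases c) auto
  then show ?thesis
    using set_clause_constraint distinct_card by metis
qed

lemma not_irreducible_if_narrow_clauses:
  assumes narrow: "\<forall>c\<in>set cs. clause_vars c \<subseteq> {..<n} \<and> card (clause_vars c) < n"
  shows "\<not> irreducible n (solutions n cs)"
proof (rule not_irreducible_if_narrow_constraints)
  have "set vs \<subseteq> {..<n} \<and> length vs < n"
    if constraint: "(vs, P) \<in> set (map clause_constraint cs)" for vs P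
  proof -
    obtain c where "c \<in> set cs" "clause_constraint c = (vs, P)"
      using constraint by auto
    then show ?thesis
      using narrow set_clause_constraint[of c] length_clause_constraint[of c] by auto
  qed
  then show "\<forall>(vs, P)\<in>set (map clause_constraint cs). set vs \<subseteq> {..<n} \<and> length vs < n"
    by blast
  show "solutions n cs =
      {a. length a = n \<and> (\<forall>(vs, P)\<in>set (map clause_constraint cs). P (map (\<lambda>j. a ! j) vs))}"
    by (simp add: solutions_def case_prod_beta clause_constraint_sat)
qed

lemma card_less_iff_ne_lessThan: "V \<subseteq> {..<n} \<Longrightarrow> card V < n \<longleftrightarrow> V \<noteq> {..<n}"
  by (metis card_lessThan finite_lessThan order.irrefl psubsetI psubset_card_mono)

lemma irreducible_has_full_clause:
  assumes "\<forall>c\<in>set cs. clause_vars c \<subseteq> {..<n}" and "irreducible n (solutions n cs)"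
  shows "\<exists>c\<in>set cs. clause_vars c = {..<n}"
  using assms not_irreducible_if_narrow_clauses card_less_iff_ne_lessThan by metis

lemma card_clause_vars_le_2: "(\<And>js. c \<noteq> COr js) \<Longrightarrow> card (clause_vars c) \<le> 2"
  by (cases c) (auto simp: card_insert_le_m1)

lemma full_clause_sat:
  assumes "3 \<le> n" "clause_vars c = {..<n}" "length a = n"
  shows "clause_sat a c \<longleftrightarrow> True \<in> set a"
proof -
  have "\<exists>js. c = COr js"
  proof (rule ccontr)
    assume "\<nexists>js. c = COr js"
    then have "card (clause_vars c) \<le> 2"
      by (intro card_clause_vars_le_2) blast
    then show False
      using assms(1,2) by simp
  qed
  then obtain js where js: "c = COr js" ..
  then have "set js = {..<n}"
    using assms(2) by simp
  then show ?thesis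
    using js assms(3) by (auto simp: in_set_conv_nth)
qed

lemma removeAll_upt_nonempty:
  assumes "k < n" "k \<noteq> i"
  shows "removeAll i [0..<n] \<noteq> []"
proof -
  have "k \<in> set (removeAll i [0..<n])"
    using assms by simp
  then show ?thesis
    by (metis empty_iff empty_set)
qed

lemma full_or_clause_weakening:
  assumes "2 \<le> n" "clause_wf c" "clause_vars c \<subseteq> {..<n}" "clause_vars c \<noteq> {..<n}"
    and "\<forall>i. c \<noteq> CImp i i"
  obtains ws where "ws \<noteq> []" "set ws \<subset> {..<n}"
    and "\<And>a. length a = n \<Longrightarrow> clause_sat a c \<Longrightarrow> True \<in> set a \<longleftrightarrow> (\<exists>i\<in>set ws. a ! i)"
proof (cases c)
  case (CPos i)
  show ?thesis
  proof (rule that[of "[i]"])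
    show "set [i] \<subset> {..<n}"
      using assms(3,4) CPos by auto
    show "True \<in> set a \<longleftrightarrow> (\<exists>k\<in>set [i]. a ! k)" if "length a = n" "clause_sat a c" for a
      using that assms(3) CPos by (auto simp: in_set_conv_nth)
  qed simp
next
  case (COr js)
  show ?thesis
  proof (rule that[of js])
    show "js \<noteq> []" "set js \<subset> {..<n}"
      using assms(2-4) COr by auto
    show "True \<in> set a \<longleftrightarrow> (\<exists>k\<in>set js. a ! k)" if "length a = n" "clause_sat a c" for a
      using that assms(3) COr by (auto simp: in_set_conv_nth)
  qed
next
  case (CNeg i)
  then have "i < n"
    using assms(3) by simp
  show ?thesis
  proof (rule that[of "removeAll i [0..<n]"])
    have "1 - i < n" "1 - i \<noteq> i"
      using assms(1) by arith+
    then show "removeAll i [0..<n] \<noteq> []"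
      by (rule removeAll_upt_nonempty)
    show "set (removeAll i [0..<n]) \<subset> {..<n}"
      using \<open>i < n\<close> by auto
    show "True \<in> set a \<longleftrightarrow> (\<exists>k\<in>set (removeAll i [0..<n]). a ! k)"
      if "length a = n" "clause_sat a c" for a
      using that CNeg by (auto simp: in_set_conv_nth)
  qed
next
  case (CImp i j)
  then have "i < n" "j < n" "i \<noteq> j"
    using assms(3,5) by auto
  show ?thesis
  proof (rule that[of "removeAll i [0..<n]"])
    show "removeAll i [0..<n] \<noteq> []"
      using \<open>j < n\<close> \<open>i \<noteq> j\<close> by (intro removeAll_upt_nonempty) auto
    show "set (removeAll i [0..<n]) \<subset> {..<n}"
      using \<open>i < n\<close> by auto
    show "True \<in> set a \<longleftrightarrow> (\<exists>k\<in>set (removeAll i [0..<n]). a ! k)"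
      if "length a = n" "clause_sat a c" for a
      using that CImp \<open>j < n\<close> \<open>i \<noteq> j\<close> by (auto simp: in_set_conv_nth)
  qed
qed

lemma irreducible_IHSB_plus_eq_OR_rel:
  assumes "3 \<le> n" "IHSB_plus n R" "irreducible n R"
  shows "R = OR_rel n"
proof -
  obtain cs where wf: "\<forall>c\<in>set cs. clause_wf c \<and> clause_vars c \<subseteq> {..<n}"
    and R: "R = solutions n cs"
    using assms(2) by (rule IHSB_plusE)
  then obtain c0 where c0: "c0 \<in> set cs" "clause_vars c0 = {..<n}"
    using irreducible_has_full_clause assms(3) by blast
  define S where "S = filter (\<lambda>c. clause_vars c \<noteq> {..<n}) cs"
  have R_S: "R = solutions n S \<inter> OR_rel n"
  proof -
    have "(\<forall>c\<in>set cs. clause_sat a c) \<longleftrightarrow> (\<forall>c\<in>set S. clause_sat a c) \<and> True \<in> set a"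
      if "length a = n" for a
      using full_clause_sat[OF assms(1) _ that] c0 unfolding S_def set_filter by blast
    then show ?thesis
      unfolding R solutions_def OR_rel_def by blast
  qed
  have "\<forall>c\<in>set S. \<exists>i. c = CImp i i"
  proof (rule ccontr)
    assume "\<not> ?thesis"
    then obtain c where c: "c \<in> set S" "\<forall>i. c \<noteq> CImp i i"
      by blast
    then have c_narrow: "clause_wf c" "clause_vars c \<subseteq> {..<n}" "clause_vars c \<noteq> {..<n}"
      using wf unfolding S_def by auto
    obtain ws where ws: "ws \<noteq> []" "set ws \<subset> {..<n}"
      and equiv: "\<And>a. length a = n \<Longrightarrow> clause_sat a c \<Longrightarrow> True \<in> set a \<longleftrightarrow> (\<exists>i\<in>set ws. a ! i)"
      by (rule full_or_clause_weakening[of n c]) (use assms(1) c(2) c_narrow in auto)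
    have "R = solutions n (COr ws # S)"
      unfolding R_S solutions_def OR_rel_def using equiv c(1) by auto
    moreover have "\<forall>c\<in>set (COr ws # S). clause_vars c \<subseteq> {..<n} \<and> card (clause_vars c) < n"
      using ws wf card_less_iff_ne_lessThan unfolding S_def by auto
    ultimately show False
      using assms(3) not_irreducible_if_narrow_clauses by metis
  qed
  then have "solutions n S = {a. length a = n}"
    unfolding solutions_def by fastforce
  then show ?thesis
    unfolding R_S OR_rel_def by blast
qed

lemma irreducible_unary_in_Gamma:
  assumes "is_rel 1 R" "irreducible 1 R"
  shows "\<exists>(k, S)\<in>Gamma. k = 1 \<and> is_permutation_of 1 R S"
proof -
  define p where "p x \<longleftrightarrow> [x] \<in> R" for x
  have R: "a \<in> R \<longleftrightarrow> length a = 1 \<and> p (a ! 0)" for a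
  proof (cases "length a = 1")
    case True
    have "a \<in> R \<longleftrightarrow> [a ! 0] \<in> R"
      using arg_cong[OF list_length_1[OF True], of "\<lambda>x. x \<in> R"] .
    then show ?thesis
      using True by (simp add: p_def)
  qed (use assms(1) in \<open>auto simp: is_rel_def\<close>)
  have "p True \<noteq> p False"
  proof
    assume "p True = p False"
    then have "p (a ! 0) = p True" for a
      by (cases "a ! 0") auto
    then have "R = {a. length a = 1 \<and> (\<forall>(vs, P)\<in>set [([], \<lambda>_. p True)]. P (map (\<lambda>j. a ! j) vs))}"
      by (auto simp: R)
    then have "\<not> irreducible 1 R"
      by (rule not_irreducible_if_narrow_constraints[rotated]) simp
    then show False
      using assms(2) by simp
  qed
  then obtain b where "p b" "\<not> p (\<not> b)"
    by (metis (full_types))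
  have "is_permutation_of 1 R {[b]}"
  proof (rule is_permutation_of_same[OF assms(1)], intro allI impI)
    fix a :: "bool list"
    assume "length a = 1"
    then obtain x where "a = [x]"
      by (cases a) auto
    then show "a \<in> R \<longleftrightarrow> a \<in> {[b]}"
      using \<open>p b\<close> \<open>\<not> p (\<not> b)\<close> by (cases x; cases b) (auto simp: p_def)
  qed
  moreover have "(1, {[b]}) \<in> Gamma"
    using Gamma_members(1,2) by (cases b) simp_all
  ultimately show ?thesis
    by blast
qed

lemma binary_closed_cases:
  fixes f :: "bool \<Rightarrow> bool \<Rightarrow> bool"
  assumes closed: "\<And>x1 y1 x2 y2 x3 y3. f x1 y1 \<Longrightarrow> f x2 y2 \<Longrightarrow> f x3 y3 \<Longrightarrow>
      f (x1 \<or> x2 \<and> x3) (y1 \<or> y2 \<and> y3)"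
  shows "(\<exists>g h. \<forall>x y. f x y = (g x \<and> h y)) \<or> f = (=) \<or> f = (\<longrightarrow>)
    \<or> f = (\<lambda>x y. y \<longrightarrow> x) \<or> f = (\<or>)"
proof -
  have "f True True" if "f True False" "f False True"
    using closed[OF that(1) that(2) that(2)] by simp
  moreover define g h where "g x \<longleftrightarrow> f x True \<or> f x False" and "h y \<longleftrightarrow> f True y \<or> f False y"
    for x y
  ultimately have "(\<forall>x y. f x y = (g x \<and> h y))
      \<or> f = (=) \<or> f = (\<longrightarrow>) \<or> f = (\<lambda>x y. y \<longrightarrow> x) \<or> f = (\<or>)"
    unfolding fun_eq_iff all_bool_eq g_def h_def
    by (cases "f True True"; cases "f True False"; cases "f False True"; cases "f False False")
      simp_all
  then show ?thesis
    by blast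
qed

lemma irreducible_binary_IHSB_plus_in_Gamma:
  assumes "is_rel 2 R" "IHSB_plus 2 R" "irreducible 2 R"
  shows "\<exists>(k, S)\<in>Gamma. k = 2 \<and> is_permutation_of 2 R S"
proof -
  define f where "f x y \<longleftrightarrow> [x, y] \<in> R" for x y
  have R: "a \<in> R \<longleftrightarrow> length a = 2 \<and> f (a ! 0) (a ! 1)" for a
  proof (cases "length a = 2")
    case True
    have "a \<in> R \<longleftrightarrow> [a ! 0, a ! 1] \<in> R"
      using arg_cong[OF list_length_2[OF True], of "\<lambda>x. x \<in> R"] .
    then show ?thesis
      using True by (simp add: f_def)
  qed (use assms(1) in \<open>auto simp: is_rel_def\<close>)
  have closed: "f (x1 \<or> x2 \<and> x3) (y1 \<or> y2 \<and> y3)" if "f x1 y1" "f x2 y2" "f x3 y3"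
    for x1 y1 x2 y2 x3 y3
  proof -
    have "[x1 \<or> x2 \<and> x3, y1 \<or> y2 \<and> y3] \<in> R"
      by (rule IHSB_plus_closed[OF assms(2), of "[x1, y1]" "[x2, y2]" "[x3, y3]"])
        (use that in \<open>auto simp: f_def less_Suc_eq numeral_2_eq_2\<close>)
    then show ?thesis
      by (simp add: f_def)
  qed
  have "(\<exists>g h. \<forall>x y. f x y = (g x \<and> h y)) \<or> f = (=) \<or> f = (\<longrightarrow>)
      \<or> f = (\<lambda>x y. y \<longrightarrow> x) \<or> f = (\<or>)"
    by (rule binary_closed_cases) (fact closed)
  then show ?thesis
  proof (elim disjE exE)
    fix g h
    assume "\<forall>x y. f x y = (g x \<and> h y)"
    then have "R = {a. length a = 2 \<and>
        (\<forall>(vs, P)\<in>set [([0], \<lambda>t. g (t ! 0)), ([1], \<lambda>t. h (t ! 0))]. P (map (\<lambda>j. a ! j) vs))}"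
      by (auto simp: R)
    then have "\<not> irreducible 2 R"
      by (rule not_irreducible_if_narrow_constraints[rotated]) simp
    then show ?thesis
      using assms(3) by simp
  next
    assume "f = (=)"
    then have "[x, y] \<in> R \<longleftrightarrow> x = y" for x y
      unfolding f_def[symmetric] by simp
    then have "is_permutation_of 2 R {[False, False], [True, True]}"
      by (intro is_permutation_of_same_2[OF assms(1)]) auto
    then show ?thesis
      by (intro bexI[OF _ Gamma_members(4)]) simp
  next
    assume "f = (\<longrightarrow>)"
    then have "[x, y] \<in> R \<longleftrightarrow> (x \<longrightarrow> y)" for x y
      unfolding f_def[symmetric] by simp
    then have "is_permutation_of 2 R {[False, False], [False, True], [True, True]}"
      by (intro is_permutation_of_same_2[OF assms(1)]) auto
    then show ?thesis
      by (intro bexI[OF _ Gamma_members(3)]) simp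
  next
    assume "f = (\<lambda>x y. y \<longrightarrow> x)"
    then have "[x, y] \<in> R \<longleftrightarrow> (y \<longrightarrow> x)" for x y
      unfolding f_def[symmetric] by simp
    then have "is_permutation_of 2 R {[False, False], [False, True], [True, True]}"
      by (intro is_permutation_of_swap[OF assms(1)]) auto
    then show ?thesis
      by (intro bexI[OF _ Gamma_members(3)]) simp
  next
    assume "f = (\<or>)"
    then have "[x, y] \<in> R \<longleftrightarrow> x \<or> y" for x y
      unfolding f_def[symmetric] by simp
    then have "is_permutation_of 2 R (OR_rel 2)"
      by (intro is_permutation_of_same_2[OF assms(1)]) (auto simp: OR_rel_def)
    then show ?thesis
      by (intro bexI[OF _ Gamma_members(5)]) auto
  qed
qed

theorem mainTheorem11:
  fixes n :: nat and R :: "bool list set"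
  assumes "is_rel n R"
    and "IHSB_plus n R"
    and "irreducible n R"
  shows "\<exists>(k, S)\<in>Gamma. k = n \<and> is_permutation_of n R S"
proof -
  consider "n = 0" | "n = 1" | "n = 2" | "3 \<le> n"
    by linarith
  then show ?thesis
  proof cases
    case 1
    obtain cs where wf: "\<forall>c\<in>set cs. clause_wf c \<and> clause_vars c \<subseteq> {..<n}"
      and "R = solutions n cs"
      using assms(2) by (rule IHSB_plusE)
    then have "\<exists>c\<in>set cs. clause_vars c = {..<n}"
      using irreducible_has_full_clause assms(3) by blast
    then show ?thesis
      using wf clause_vars_nonempty 1 by auto
  next
    case 2
    then show ?thesis
      using irreducible_unary_in_Gamma assms by simp
  next
    case 3
    then show ?thesis
      using irreducible_binary_IHSB_plus_in_Gamma assms by simp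
  next
    case 4
    then have "R = OR_rel n"
      using irreducible_IHSB_plus_eq_OR_rel assms by simp
    then have "is_permutation_of n R (OR_rel n)"
      using is_permutation_of_same[OF assms(1)] by blast
    then show ?thesis
      using 4 by (intro bexI[OF _ Gamma_members(5)]) auto
  qed
qed

end
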